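(* Assume the setting and hypotheses (i)–(iii) of the following context, with parameters $\alpha,\alpha_0,\beta'>0$. Let $w_{\min}:=\min_i w_i$, and let $$q:=\frac{2w_{\max}}{w_{\min}}\Big[\frac{2\alpha}{\sqrt d}\Big(1+\alpha_0\sqrt{\tfrac kd}\Big)^2+\beta'\Big],$$ and assume $q<1/2$. Let $\Psi$ be a tensor with $\psi:=\|\Psi\|\le w_{\min}/6$, and $\hat T=T+\Psi$. Fix $j\in[k]$ and unit vectors $\hat a,\hat b$ with $\epsilon_0:=\max\{\mathrm{dist}(\hat a,a_j),\mathrm{dist}(\hat b,b_j)\}$ satisfying $$\epsilon_0\le\min\Big\{\frac{\beta'}{\alpha_0},\ \sqrt{\frac{w_{\min}}{6w_{\max}}},\ \frac{w_{\min}q}{4w_{\max}},\ \frac{2w_{\max}}{w_{\min}q}\Big(\frac{w_{\min}}{6w_{\max}}-\alpha\frac{\sqrt k}{d}\Big)\Big\}.$$ Let $\hat c:=\hat T(\hat a,\hat b,I)/\|\hat T(\hat a,\hat b,I)\|$ and $\mathrm{Const}:=\frac{2}{w_{\min}}\big(\psi+w_{\max}\alpha\frac{\sqrt k}{d}\big)$. Then $\mathrm{dist}(\hat c,c_j)\le \mathrm{Const}+q\epsilon_0$. Moreover, if $\mathrm{dist}(\hat c,c_j)\le\epsilon_0$, then $\hat w:=\hat T(\hat a,\hat b,\hat c)$ satisfies $|\hat w-w_j|\le \frac{w_{\min}}{2}\mathrm{Const}+w_{\min}q\epsilon_0$.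
   Context: Setting: $w_1,\dots,w_k>0$, $w_{\max}=\max_i w_i$; $a_i,b_i,c_i\in\mathbb{R}^d$ unit vectors; $T=\sum_{i\in[k]}w_i a_i\otimes b_i\otimes c_i$; $A=[a_1\cdots a_k]$, $B$, $C$ similarly. Hypotheses: (i) $\max_{i\ne j}\max\{|\langle a_i,a_j\rangle|,|\langle b_i,b_j\rangle|,|\langle c_i,c_j\rangle|\}\le\alpha/\sqrt d$; (ii) $\max\{\|A\|,\|B\|,\|C\|\}\le 1+\alpha_0\sqrt{k/d}$; (iii) $\|T\|\le\alpha_0w_{\max}$ and for every $j$, $\|\sum_{i\ne j}w_i\langle a_i,a_j\rangle\langle b_i,b_j\rangle c_i\|\le\alpha w_{\max}\sqrt k/d$. Multilinear form: $T(u,v,w)=\sum_{i,j,l}T_{ijl}u_iv_jw_l$; $T(u,v,I)$ is the vector with $l$-th entry $\sum_{i,j}T_{ijl}u_iv_j$. Tensor spectral norm $\|T\|=\sup_{\|u\|=\|v\|=\|w\|=1}|T(u,v,w)|$; matrix norms are spectral norms. $\mathrm{dist}(u,v):=\sup_{z\perp u}\frac{\langle z,v\rangle}{\|z\|\|v\|}$. *)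

theory Defs
  imports "HOL-Analysis.Analysis"
begin

type_synonym 'd tensor3 = "'d \<Rightarrow> 'd \<Rightarrow> 'd \<Rightarrow> real"

definition tform :: "'d::finite tensor3 \<Rightarrow> real^'d \<Rightarrow> real^'d \<Rightarrow> real^'d \<Rightarrow> real" where
  "tform T u v w = (\<Sum>i\<in>UNIV. \<Sum>j\<in>UNIV. \<Sum>l\<in>UNIV. T i j l * u$i * v$j * w$l)"

definition tform_I :: "'d::finite tensor3 \<Rightarrow> real^'d \<Rightarrow> real^'d \<Rightarrow> real^'d" where
  "tform_I T u v = (\<chi> l. \<Sum>i\<in>UNIV. \<Sum>j\<in>UNIV. T i j l * u$i * v$j)"

definition tnorm :: "'d::finite tensor3 \<Rightarrow> real" where
  "tnorm T = Sup {\<bar>tform T u v w\<bar> | u v w. norm u = 1 \<and> norm v = 1 \<and> norm w = 1}"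

definition cp_tensor :: "('k::finite \<Rightarrow> real) \<Rightarrow> ('k \<Rightarrow> real^'d) \<Rightarrow> ('k \<Rightarrow> real^'d) \<Rightarrow> ('k \<Rightarrow> real^'d) \<Rightarrow> 'd::finite tensor3" where
  "cp_tensor w a b c = (\<lambda>p q r. \<Sum>i\<in>UNIV. w i * (a i)$p * (b i)$q * (c i)$r)"

text \<open>Spectral norm of the d x k matrix with columns a_1..a_k (operator norm).\<close>
definition colmat_norm :: "('k::finite \<Rightarrow> real^'d::finite) \<Rightarrow> real" where
  "colmat_norm a = onorm (\<lambda>x::real^'k. \<Sum>i\<in>UNIV. x$i *\<^sub>R a i)"

text \<open>dist(u,v) := sup_{z perp u} <z,v>/(|z||v|)  (z = 0 contributes 0 by the convention x/0 = 0).\<close>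
definition vdist :: "real^'d::finite \<Rightarrow> real^'d \<Rightarrow> real" where
  "vdist u v = Sup {(z \<bullet> v) / (norm z * norm v) | z. z \<bullet> u = 0}"

end

theory Submission
  imports Defs
begin

text \<open>
  The proof splits the contraction T^(a^, b^, I) into a signal and a residual:
  T(a^, b^, I) = t c_j + S(a^, b^), where t = w_j <a^,a_j><b^,b_j> and S (the
  off-diagonal part, defined below) sums the components i ~= j.  Writing a^ = x a_j + p_a and
  b^ = y b_j + p_b with |p_a|, |p_b| <= eps0, bilinearity of S splits the residual into
  S(a_j, b_j) (bounded by hypothesis (iii)), two cross terms (bounded through incoherence (i)
  and the column-matrix norms (ii)) and S(p_a, p_b) = T(p_a, p_b, I) (bounded by |T|).
  Finally an elementary fact about a vector v = t c + R with |R| < |t| bounds both the angle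
  between v and c and the deviation of |v| = T^(a^, b^, c^) from |t|; the explicit
  smallness conditions on eps0 and psi are exactly what makes the resulting numbers fit.
\<close>

subsection \<open>Multilinear forms and the spectral norm\<close>

lemma double_sum_factor:
  "(\<Sum>p\<in>UNIV. \<Sum>q\<in>UNIV. (W::real) * a $ p * b $ q * C * u $ p * v $ q)
   = W * (\<Sum>p\<in>(UNIV::'d::finite set). a $ p * u $ p) * (\<Sum>q\<in>(UNIV::'e::finite set). b $ q * v $ q) * C"
proof -
  have "W * (\<Sum>p\<in>(UNIV::'d set). a $ p * u $ p) * (\<Sum>q\<in>(UNIV::'e set). b $ q * v $ q) * C
     = (W*C) * (\<Sum>p\<in>UNIV. \<Sum>q\<in>UNIV. (a $ p * u $ p) * (b $ q * v $ q))"
    by (simp add: sum_product)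
  also have "\<dots> = (\<Sum>p\<in>UNIV. \<Sum>q\<in>UNIV. W * a $ p * b $ q * C * u $ p * v $ q)"
    by (simp add: sum_distrib_left ac_simps)
  finally show ?thesis by simp
qed

lemma tform_I_cp_tensor:
  "tform_I (cp_tensor w a b c) u v = (\<Sum>i\<in>UNIV. (w i * (a i \<bullet> u) * (b i \<bullet> v)) *\<^sub>R c i)"
proof -
  have "(\<Sum>p\<in>UNIV. \<Sum>q\<in>UNIV. (\<Sum>i\<in>UNIV. w i * a i $ p * b i $ q * c i $ l) * u $ p * v $ q)
     = (\<Sum>i\<in>UNIV. w i * (\<Sum>p\<in>UNIV. a i $ p * u $ p) * (\<Sum>q\<in>UNIV. b i $ q * v $ q) * c i $ l)" for l
  proof -
    have "(\<Sum>p\<in>UNIV. \<Sum>q\<in>UNIV. (\<Sum>i\<in>UNIV. w i * a i $ p * b i $ q * c i $ l) * u $ p * v $ q)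
      = (\<Sum>p\<in>UNIV. \<Sum>q\<in>UNIV. \<Sum>i\<in>UNIV. w i * a i $ p * b i $ q * c i $ l * u $ p * v $ q)"
      by (simp add: sum_distrib_right)
    also have "\<dots> = (\<Sum>i\<in>UNIV. \<Sum>p\<in>UNIV. \<Sum>q\<in>UNIV. w i * a i $ p * b i $ q * c i $ l * u $ p * v $ q)"
      by (subst sum.swap, rule sum.cong, simp, rule sum.swap)
    also have "\<dots> = (\<Sum>i\<in>UNIV. w i * (\<Sum>p\<in>UNIV. a i $ p * u $ p) * (\<Sum>q\<in>UNIV. b i $ q * v $ q) * c i $ l)"
      by (rule sum.cong, simp, rule double_sum_factor)
    finally show ?thesis .
  qed
  then show ?thesis
    unfolding tform_I_def cp_tensor_def vec_eq_iff
    by (simp add: sum_component inner_vec_def)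
qed

lemma tform_I_add:
  "tform_I (\<lambda>p r s. T p r s + P p r s) u v = tform_I T u v + tform_I P u v"
  unfolding tform_I_def vec_eq_iff by (simp add: distrib_right sum.distrib)

lemma tform_eq_inner: "tform T u v w = tform_I T u v \<bullet> w"
proof -
  have "tform_I T u v \<bullet> w = (\<Sum>l\<in>UNIV. \<Sum>i\<in>UNIV. \<Sum>j\<in>UNIV. T i j l * u$i * v$j * w$l)"
    unfolding tform_I_def inner_vec_def by (simp only: vec_lambda_beta inner_real_def sum_distrib_right)
  also have "\<dots> = (\<Sum>i\<in>UNIV. \<Sum>l\<in>UNIV. \<Sum>j\<in>UNIV. T i j l * u$i * v$j * w$l)"
    by (rule sum.swap)
  also have "\<dots> = (\<Sum>i\<in>UNIV. \<Sum>j\<in>UNIV. \<Sum>l\<in>UNIV. T i j l * u$i * v$j * w$l)"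
    by (rule sum.cong[OF refl], rule sum.swap)
  finally show ?thesis unfolding tform_def by simp
qed

text \<open>Evaluating T(u, v, .) at the normalized contraction gives the length of the contraction;
  this identifies the estimated weight T^(a^, b^, c^) with |T^(a^, b^, I)|.\<close>
lemma tform_at_normalized:
  "tform T u v ((1 / norm (tform_I T u v)) *\<^sub>R tform_I T u v) = norm (tform_I T u v)"
  by (simp add: tform_eq_inner power2_norm_eq_inner[symmetric] power2_eq_square)

lemma tform_scaleR:
  "tform T (r *\<^sub>R u) v w = r * tform T u v w"
  "tform T u (r *\<^sub>R v) w = r * tform T u v w"
  "tform T u v (r *\<^sub>R w) = r * tform T u v w"
  unfolding tform_def by (simp_all add: sum_distrib_left mult.commute mult.left_commute)

lemma tnorm_bdd: "bdd_above {\<bar>tform T u v w\<bar> | u v w. norm u = 1 \<and> norm v = 1 \<and> norm w = 1}"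
proof (rule bdd_aboveI[where M="\<Sum>i\<in>UNIV. \<Sum>j\<in>UNIV. \<Sum>l\<in>UNIV. \<bar>T i j l\<bar>"], clarify)
  fix u v w :: "real^'a" assume n: "norm u = 1" "norm v = 1" "norm w = 1"
  have comp: "\<bar>x $ i\<bar> \<le> 1" if "norm x = 1" for x :: "real^'a" and i
    using component_le_norm_cart[of x i] that by simp
  have "\<bar>tform T u v w\<bar> \<le> (\<Sum>i\<in>UNIV. \<Sum>j\<in>UNIV. \<Sum>l\<in>UNIV. \<bar>T i j l * u$i * v$j * w$l\<bar>)"
    unfolding tform_def
    by (rule order_trans[OF sum_abs], rule sum_mono, rule order_trans[OF sum_abs], rule sum_mono, rule sum_abs)
  also have "\<dots> \<le> (\<Sum>i\<in>UNIV. \<Sum>j\<in>UNIV. \<Sum>l\<in>UNIV. \<bar>T i j l\<bar>)"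
  proof (intro sum_mono)
    fix i j l
    have "\<bar>u$i\<bar> * \<bar>v$j\<bar> * \<bar>w$l\<bar> \<le> 1"
      using comp n by (intro mult_le_one) auto
    then show "\<bar>T i j l * u$i * v$j * w$l\<bar> \<le> \<bar>T i j l\<bar>"
      by (simp add: abs_mult mult.assoc mult_left_le)
  qed
  finally show "\<bar>tform T u v w\<bar> \<le> (\<Sum>i\<in>UNIV. \<Sum>j\<in>UNIV. \<Sum>l\<in>UNIV. \<bar>T i j l\<bar>)" .
qed

lemma tform_unit_le_tnorm:
  assumes "norm u = 1" "norm v = 1" "norm w = 1"
  shows "\<bar>tform T u v w\<bar> \<le> tnorm T"
  unfolding tnorm_def by (rule cSup_upper[OF _ tnorm_bdd]) (use assms in blast)

lemma tnorm_nonneg: "tnorm (T::'a::finite tensor3) \<ge> 0"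
proof -
  obtain i :: 'a where True by simp
  have "\<bar>tform T (axis i 1) (axis i 1) (axis i 1)\<bar> \<le> tnorm T"
    by (rule tform_unit_le_tnorm) (simp_all add: norm_axis_1)
  then show ?thesis by linarith
qed

lemma tform_le: "\<bar>tform T u v w\<bar> \<le> tnorm T * norm u * norm v * norm w"
proof (cases "u = 0 \<or> v = 0 \<or> w = 0")
  case True
  then have "tform T u v w = 0"
    using tform_scaleR(1)[of T 0 u v w] tform_scaleR(2)[of T u 0 v w] tform_scaleR(3)[of T u v 0 w]
    by auto
  then show ?thesis using tnorm_nonneg[of T] by simp
next
  case False
  then have p: "norm u > 0" "norm v > 0" "norm w > 0" by auto
  have "\<bar>tform T ((1/norm u) *\<^sub>R u) ((1/norm v) *\<^sub>R v) ((1/norm w) *\<^sub>R w)\<bar> \<le> tnorm T"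
    by (rule tform_unit_le_tnorm) (use p in auto)
  then have "\<bar>tform T u v w\<bar> / (norm u * norm v * norm w) \<le> tnorm T"
    using p by (simp add: tform_scaleR abs_divide abs_mult mult_ac)
  then show ?thesis using p by (simp add: pos_divide_le_eq mult.assoc)
qed

text \<open>|T(u, v, I)| <= |T| |u| |v|: test the contraction against itself.\<close>
lemma tform_I_le: "norm (tform_I T u v) \<le> tnorm T * norm u * norm v"
proof -
  let ?g = "tform_I T u v"
  have "norm ?g * norm ?g = tform T u v ?g"
    by (simp add: tform_eq_inner power2_norm_eq_inner[symmetric] power2_eq_square)
  also have "\<dots> \<le> (tnorm T * norm u * norm v) * norm ?g"
    using tform_le[of T u v ?g] by linarith
  finally have h: "norm ?g * norm ?g \<le> (tnorm T * norm u * norm v) * norm ?g" .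
  show ?thesis
  proof (cases "norm ?g = 0")
    case True
    then show ?thesis using tnorm_nonneg[of T] by simp
  next
    case False
    then show ?thesis using h by (simp add: mult_right_le_imp_le)
  qed
qed

subsection \<open>The distance dist(u, v)\<close>

lemma vdist_bdd: "bdd_above {(z \<bullet> v) / (norm z * norm v) | z. z \<bullet> u = 0}"
proof (rule bdd_aboveI[where M=1], clarify)
  fix z
  have "z \<bullet> v \<le> norm z * norm v" by (rule norm_cauchy_schwarz)
  then show "(z \<bullet> v) / (norm z * norm v) \<le> 1"
    by (cases "norm z * norm v = 0") (auto simp: divide_le_eq_1)
qed

lemma vdist_le:
  assumes "\<And>z. z \<bullet> u = 0 \<Longrightarrow> (z \<bullet> v) / (norm z * norm v) \<le> B"
  shows "vdist u v \<le> B"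
  unfolding vdist_def
proof (rule cSup_least)
  have "(0 \<bullet> v) / (norm 0 * norm v) \<in> {(z \<bullet> v) / (norm z * norm v) | z. z \<bullet> u = 0}" by auto
  then show "{(z \<bullet> v) / (norm z * norm v) | z. z \<bullet> u = 0} \<noteq> {}" by blast
next
  fix x assume "x \<in> {(z \<bullet> v) / (norm z * norm v) | z. z \<bullet> u = 0}"
  then show "x \<le> B" using assms by blast
qed

text \<open>Conversely, for unit vectors dist(u, v) dominates the length of the component of u
  orthogonal to v (the witness is z = v - <u,v> u).\<close>
lemma perp_le_vdist:
  fixes u v :: "real^'a::finite"
  assumes u: "norm u = 1" and v: "norm v = 1"
  shows "norm (u - (u \<bullet> v) *\<^sub>R v) \<le> vdist u v"
proof -
  let ?x = "u \<bullet> v"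
  let ?z = "v - ?x *\<^sub>R u"
  have uu: "u \<bullet> u = 1" and vv: "v \<bullet> v = 1" using u v by (simp_all add: norm_eq_1)
  have "?z \<bullet> u = v \<bullet> u - ?x * (u \<bullet> u)" by (simp add: inner_diff_left)
  then have zu: "?z \<bullet> u = 0" using uu by (simp add: inner_commute)
  have zv: "?z \<bullet> v = 1 - ?x^2" using vv by (simp add: inner_diff_left power2_eq_square)
  have nz: "norm ?z ^ 2 = 1 - ?x^2" unfolding power2_norm_eq_inner using uu vv
    by (simp add: inner_diff_left inner_diff_right inner_commute power2_eq_square algebra_simps)
  have np: "norm (u - ?x *\<^sub>R v) ^ 2 = 1 - ?x^2" unfolding power2_norm_eq_inner using uu vv
    by (simp add: inner_diff_left inner_diff_right inner_commute power2_eq_square algebra_simps)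
  have same_length: "norm (u - ?x *\<^sub>R v) = norm ?z" using nz np
    by (metis norm_ge_zero power2_eq_imp_eq)
  have "(?z \<bullet> v) / (norm ?z * norm v) = norm ?z ^ 2 / norm ?z"
    using zv nz v by simp
  also have "\<dots> = norm ?z" by (cases "norm ?z = 0") (simp_all add: power2_eq_square)
  finally have "(?z \<bullet> v) / (norm ?z * norm v) = norm ?z" .
  moreover have "(?z \<bullet> v) / (norm ?z * norm v) \<le> vdist u v"
    unfolding vdist_def by (rule cSup_upper[OF _ vdist_bdd]) (use zu in blast)
  ultimately show ?thesis using same_length by simp
qed

lemma unit_split_along:
  fixes u v :: "real^'d::finite"
  assumes u: "norm u = 1" and v: "norm v = 1" and e: "vdist u v \<le> e"
  shows "u = (u \<bullet> v) *\<^sub>R v + (u - (u \<bullet> v) *\<^sub>R v)" "v \<bullet> (u - (u \<bullet> v) *\<^sub>R v) = 0"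
    "norm (u - (u \<bullet> v) *\<^sub>R v) \<le> e" "(u \<bullet> v)^2 \<ge> 1 - e^2" "\<bar>u \<bullet> v\<bar> \<le> 1" "0 \<le> e"
proof -
  show "u = (u \<bullet> v) *\<^sub>R v + (u - (u \<bullet> v) *\<^sub>R v)" by simp
  have vv: "v \<bullet> v = 1" "u \<bullet> u = 1" using u v by (simp_all add: norm_eq_1)
  show "v \<bullet> (u - (u \<bullet> v) *\<^sub>R v) = 0" using vv by (simp add: inner_diff_right inner_commute)
  have pe: "norm (u - (u \<bullet> v) *\<^sub>R v) \<le> e" using perp_le_vdist[OF u v] e by linarith
  then show "norm (u - (u \<bullet> v) *\<^sub>R v) \<le> e" .
  show "0 \<le> e" using pe norm_ge_zero order_trans by blast
  have np: "norm (u - (u \<bullet> v) *\<^sub>R v) ^ 2 = 1 - (u \<bullet> v)^2" unfolding power2_norm_eq_inner using vv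
    by (simp add: inner_diff_left inner_diff_right inner_commute power2_eq_square algebra_simps)
  have "norm (u - (u \<bullet> v) *\<^sub>R v) ^ 2 \<le> e^2" using pe by (intro power_mono) auto
  then show "(u \<bullet> v)^2 \<ge> 1 - e^2" using np by linarith
  show "\<bar>u \<bullet> v\<bar> \<le> 1" using Cauchy_Schwarz_ineq2[of u v] u v by simp
qed

lemma perturbed_direction:
  fixes c R v :: "real^'d::finite"
  assumes c: "norm c = 1" and v: "v = t *\<^sub>R c + R" and small: "norm R < \<bar>t\<bar>"
  shows "vdist ((1 / norm v) *\<^sub>R v) c \<le> norm R / \<bar>t\<bar>" and "\<bar>norm v - \<bar>t\<bar>\<bar> \<le> norm R"
proof -
  have "norm v \<le> \<bar>t\<bar> + norm R" "\<bar>t\<bar> - norm R \<le> norm v"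
    unfolding v using norm_triangle_ineq[of "t *\<^sub>R c" R] norm_diff_ineq[of "t *\<^sub>R c" R] c by simp_all
  then show "\<bar>norm v - \<bar>t\<bar>\<bar> \<le> norm R" by linarith
  with small have v_nz: "v \<noteq> 0" by auto
  have t: "0 < \<bar>t\<bar>" using small norm_ge_zero[of R] by linarith
  show "vdist ((1 / norm v) *\<^sub>R v) c \<le> norm R / \<bar>t\<bar>"
  proof (rule vdist_le)
    fix z assume "z \<bullet> (1 / norm v) *\<^sub>R v = 0"
    then have "t * (z \<bullet> c) = - (z \<bullet> R)"
      using v_nz unfolding v by (simp add: inner_add_right)
    then have "\<bar>z \<bullet> c\<bar> * \<bar>t\<bar> \<le> norm z * norm R"
      by (metis Cauchy_Schwarz_ineq2 abs_minus_cancel abs_mult mult.commute)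
    then have zc: "\<bar>z \<bullet> c\<bar> \<le> norm z * (norm R / \<bar>t\<bar>)"
      by (simp only: times_divide_eq_right pos_le_divide_eq[OF t])
    show "(z \<bullet> c) / (norm z * norm c) \<le> norm R / \<bar>t\<bar>"
    proof (cases "z = 0")
      case False
      then show ?thesis using zc c by (simp add: divide_le_eq mult.commute)
    qed simp
  qed
qed

subsection \<open>Matrices given by their columns\<close>

lemma colmat_bounded_linear:
  "bounded_linear (\<lambda>x::real^'k::finite. \<Sum>i\<in>UNIV. x$i *\<^sub>R (a i :: real^'d::finite))"
  by (intro bounded_linear_sum bounded_linear_compose[OF bounded_linear_scaleR_left] bounded_linear_vec_nth)

lemma colmat_le: "norm (\<Sum>i\<in>UNIV. x$i *\<^sub>R a i) \<le> colmat_norm a * norm x"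
  unfolding colmat_norm_def by (rule onorm[OF colmat_bounded_linear])

lemma colmat_nonneg: "colmat_norm a \<ge> 0"
  unfolding colmat_norm_def by (rule onorm_pos_le[OF colmat_bounded_linear])

lemma colmat_transpose_le: "norm (\<chi> i. a i \<bullet> p) \<le> colmat_norm a * norm p"
proof -
  define y where "y = (\<chi> i. a i \<bullet> p)"
  have "norm y * norm y = y \<bullet> y"
    by (simp add: power2_norm_eq_inner[symmetric] power2_eq_square)
  also have "\<dots> = (\<Sum>i\<in>UNIV. y$i * y$i)"
    by (simp only: inner_vec_def inner_real_def)
  also have "\<dots> = (\<Sum>i\<in>UNIV. y$i *\<^sub>R a i) \<bullet> p"
    by (simp add: y_def inner_sum_left)
  also have "\<dots> \<le> norm (\<Sum>i\<in>UNIV. y$i *\<^sub>R a i) * norm p"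
    by (rule norm_cauchy_schwarz)
  also have "\<dots> \<le> (colmat_norm a * norm p) * norm y"
    using mult_right_mono[OF colmat_le[of y a] norm_ge_zero[of p]] by (simp only: mult_ac)
  finally have "norm y * norm y \<le> (colmat_norm a * norm p) * norm y" .
  then have "norm y \<le> colmat_norm a * norm p"
  proof (cases "norm y = 0")
    case True then show ?thesis using colmat_nonneg[of a] by simp
  next
    case False
    then show ?thesis using \<open>norm y * norm y \<le> _\<close> by (simp add: mult_right_le_imp_le)
  qed
  then show ?thesis unfolding y_def .
qed

text \<open>A sum sum_i f_i <b_i,p> c_i with bounded coefficients |f_i| <= m is the product
  C diag(f) B^T p, hence bounded by |C| m |B| |p|.\<close>
lemma weighted_colmat_le:
  assumes f: "\<And>i. \<bar>f i\<bar> \<le> m"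
  shows "norm (\<Sum>i\<in>UNIV. (f i * (b i \<bullet> p)) *\<^sub>R c i) \<le> colmat_norm c * (m * (colmat_norm b * norm p))"
proof -
  have m: "m \<ge> 0" using abs_ge_zero[of "f undefined"] f[of undefined] by linarith
  define y where "y = (\<chi> i. b i \<bullet> p)"
  define x where "x = (\<chi> i. f i * (b i \<bullet> p))"
  have yi: "y$i = b i \<bullet> p" for i unfolding y_def by simp
  have xi: "x$i = f i * y$i" for i unfolding x_def yi by simp
  have "norm x ^ 2 = (\<Sum>i\<in>UNIV. x$i * x$i)"
    by (simp only: power2_norm_eq_inner inner_vec_def inner_real_def)
  also have "\<dots> \<le> (\<Sum>i\<in>UNIV. m^2 * (y$i * y$i))"
  proof (rule sum_mono)
    fix i
    have "\<bar>f i\<bar>^2 \<le> m^2" using f[of i] by (intro power_mono) auto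
    then have "(f i)^2 * (y$i * y$i) \<le> m^2 * (y$i * y$i)" by (intro mult_right_mono) auto
    then show "x$i * x$i \<le> m^2 * (y$i * y$i)" by (simp only: xi power2_eq_square mult_ac)
  qed
  also have "\<dots> = m^2 * (\<Sum>i\<in>UNIV. y$i * y$i)" by (simp only: sum_distrib_left)
  also have "\<dots> = (m * norm y)^2"
  proof -
    have "(\<Sum>i\<in>UNIV. y$i * y$i) = norm y ^ 2"
      by (simp only: power2_norm_eq_inner inner_vec_def inner_real_def)
    then show ?thesis by (simp only: power_mult_distrib)
  qed
  finally have sq: "norm x ^ 2 \<le> (m * norm y)^2" .
  have "norm x \<le> m * norm y"
    using m by (intro power2_le_imp_le[OF sq]) simp
  also have "\<dots> \<le> m * (colmat_norm b * norm p)"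
    using m colmat_transpose_le[of b p] unfolding y_def by (intro mult_left_mono) auto
  finally have hx: "norm x \<le> m * (colmat_norm b * norm p)" .
  have "(\<Sum>i\<in>UNIV. (f i * (b i \<bullet> p)) *\<^sub>R c i) = (\<Sum>i\<in>UNIV. x$i *\<^sub>R c i)"
    unfolding x_def by simp
  then have "norm (\<Sum>i\<in>UNIV. (f i * (b i \<bullet> p)) *\<^sub>R c i) \<le> colmat_norm c * norm x"
    using colmat_le[of x c] by simp
  also have "\<dots> \<le> colmat_norm c * (m * (colmat_norm b * norm p))"
    using hx colmat_nonneg[of c] by (intro mult_left_mono) auto
  finally show ?thesis .
qed

subsection \<open>The off-diagonal part of a contraction\<close>

definition offdiag ::
  "('k::finite \<Rightarrow> real) \<Rightarrow> ('k \<Rightarrow> real^'d::finite) \<Rightarrow> ('k \<Rightarrow> real^'d) \<Rightarrow> ('k \<Rightarrow> real^'d)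
   \<Rightarrow> 'k \<Rightarrow> real^'d \<Rightarrow> real^'d \<Rightarrow> real^'d" where
  "offdiag w a b c j u v = (\<Sum>i\<in>UNIV - {j}. (w i * (a i \<bullet> u) * (b i \<bullet> v)) *\<^sub>R c i)"

lemma tform_I_cp_split:
  "tform_I (cp_tensor w a b c) u v = (w j * (a j \<bullet> u) * (b j \<bullet> v)) *\<^sub>R c j + offdiag w a b c j u v"
  unfolding tform_I_cp_tensor offdiag_def by (simp add: sum.remove)

lemma offdiag_perp:
  assumes "a j \<bullet> u = 0"
  shows "offdiag w a b c j u v = tform_I (cp_tensor w a b c) u v"
  unfolding tform_I_cp_split[of w a b c u v j] using assms by simp

text \<open>Swapping the roles of the a's and the b's, so one cross-term bound serves both.\<close>
lemma offdiag_swap: "offdiag w a b c j u v = offdiag w b a c j v u"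
  unfolding offdiag_def by (simp add: mult_ac)

lemma offdiag_split:
  "offdiag w a b c j (x *\<^sub>R u + p) (y *\<^sub>R v + q)
   = (x * y) *\<^sub>R offdiag w a b c j u v + x *\<^sub>R offdiag w a b c j u q
     + y *\<^sub>R offdiag w a b c j p v + offdiag w a b c j p q"
proof -
  have "(w i * (a i \<bullet> (x *\<^sub>R u + p)) * (b i \<bullet> (y *\<^sub>R v + q))) *\<^sub>R c i
     = (x * y) *\<^sub>R ((w i * (a i \<bullet> u) * (b i \<bullet> v)) *\<^sub>R c i)
       + x *\<^sub>R ((w i * (a i \<bullet> u) * (b i \<bullet> q)) *\<^sub>R c i)
       + y *\<^sub>R ((w i * (a i \<bullet> p) * (b i \<bullet> v)) *\<^sub>R c i)
       + (w i * (a i \<bullet> p) * (b i \<bullet> q)) *\<^sub>R c i" for i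
    by (simp add: inner_add_right algebra_simps)
  then show ?thesis unfolding offdiag_def
    by (simp add: sum.distrib scaleR_sum_right)
qed

lemma offdiag_cross_le:
  assumes w0: "\<And>i. 0 \<le> w i" and wW: "\<And>i. w i \<le> W"
    and incoh: "\<And>i. i \<noteq> j \<Longrightarrow> \<bar>a i \<bullet> a j\<bar> \<le> \<mu>" and mu: "0 \<le> \<mu>"
  shows "norm (offdiag w a b c j (a j) p) \<le> colmat_norm c * (W * \<mu> * (colmat_norm b * norm p))"
proof -
  have W: "0 \<le> W" using w0[of j] wW[of j] by linarith
  define f where "f i = (if i = j then 0 else w i * (a i \<bullet> a j))" for i
  have "offdiag w a b c j (a j) p
      = (\<Sum>i\<in>UNIV. if i = j then 0 else (w i * (a i \<bullet> a j) * (b i \<bullet> p)) *\<^sub>R c i)"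
    unfolding offdiag_def by (simp add: sum.If_cases Diff_eq Compl_eq)
  also have "\<dots> = (\<Sum>i\<in>UNIV. (f i * (b i \<bullet> p)) *\<^sub>R c i)"
    unfolding f_def by (intro sum.cong) auto
  finally have "offdiag w a b c j (a j) p = (\<Sum>i\<in>UNIV. (f i * (b i \<bullet> p)) *\<^sub>R c i)" .
  moreover have "\<bar>f i\<bar> \<le> W * \<mu>" for i
  proof (cases "i = j")
    case True then show ?thesis using W mu unfolding f_def by simp
  next
    case False
    then have "w i * \<bar>a i \<bullet> a j\<bar> \<le> W * \<mu>" using w0 wW incoh W by (intro mult_mono) auto
    then show ?thesis using False w0[of i] unfolding f_def by (simp add: abs_mult)
  qed
  ultimately show ?thesis by (simp add: weighted_colmat_le)
qed

lemma offdiag_residual_le: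
  fixes w :: "'k::finite \<Rightarrow> real" and a b c :: "'k \<Rightarrow> real^'d::finite"
  assumes w0: "\<And>i. 0 \<le> w i" and wW: "\<And>i. w i \<le> W"
    and incoh_a: "\<And>i. i \<noteq> j \<Longrightarrow> \<bar>a i \<bullet> a j\<bar> \<le> \<mu>"
    and incoh_b: "\<And>i. i \<noteq> j \<Longrightarrow> \<bar>b i \<bullet> b j\<bar> \<le> \<mu>" and mu: "0 \<le> \<mu>"
    and Ma: "colmat_norm a \<le> M" and Mb: "colmat_norm b \<le> M" and Mc: "colmat_norm c \<le> M"
    and T: "tnorm (cp_tensor w a b c) \<le> \<kappa> * W" and beta: "\<kappa> * e \<le> \<beta>'"
    and units: "norm (a j) = 1" "norm (b j) = 1" "norm ah = 1" "norm bh = 1"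
    and close: "vdist ah (a j) \<le> e" "vdist bh (b j) \<le> e"
  shows "norm (offdiag w a b c j ah bh)
         \<le> norm (offdiag w a b c j (a j) (b j)) + W * e * (2 * \<mu> * M\<^sup>2 + \<beta>')"
proof -
  let ?S = "offdiag w a b c j"
  define x pa where "x = ah \<bullet> a j" and "pa = ah - x *\<^sub>R a j"
  define y pb where "y = bh \<bullet> b j" and "pb = bh - y *\<^sub>R b j"
  note sa = unit_split_along[OF units(3,1) close(1), folded x_def, folded pa_def]
  note sb = unit_split_along[OF units(4,2) close(2), folded y_def, folded pb_def]
  have W: "0 \<le> W" using w0[of j] wW[of j] by linarith
  have M: "0 \<le> M" using Ma colmat_nonneg[of a] by linarith
  have cross: "colmat_norm c * (W * \<mu> * (colmat_norm b' * norm p)) \<le> M * (W * \<mu> * (M * e))"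
    if "colmat_norm b' \<le> M" "norm p \<le> e" for b' :: "'k \<Rightarrow> real^'d" and p :: "real^'d"
    using that Mc W mu M by (intro mult_mono) (auto simp: colmat_nonneg)
  have "norm (?S (a j) pb) \<le> colmat_norm c * (W * \<mu> * (colmat_norm b * norm pb))"
    by (rule offdiag_cross_le) (use w0 wW incoh_a mu in auto)
  then have cross_b: "norm (?S (a j) pb) \<le> M * (W * \<mu> * (M * e))"
    using cross[OF Mb sb(3)] by (rule order_trans)
  have "norm (offdiag w b a c j (b j) pa) \<le> colmat_norm c * (W * \<mu> * (colmat_norm a * norm pa))"
    by (rule offdiag_cross_le) (use w0 wW incoh_b mu in auto)
  then have cross_a: "norm (?S pa (b j)) \<le> M * (W * \<mu> * (M * e))"
    using cross[OF Ma sa(3)] by (simp add: offdiag_swap[of w a b c j pa])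
  have "norm (?S pa pb) \<le> tnorm (cp_tensor w a b c) * norm pa * norm pb"
    unfolding offdiag_perp[where a=a and j=j and u=pa, OF sa(2)] by (rule tform_I_le)
  also have "\<dots> \<le> (\<kappa> * W) * e * e"
    using T sa(3,6) sb(3) order_trans[OF tnorm_nonneg T] by (intro mult_mono) auto
  also have "\<dots> \<le> W * \<beta>' * e"
    using mult_right_mono[OF mult_left_mono[OF beta W] sa(6)] by (simp add: mult_ac)
  finally have diag: "norm (?S pa pb) \<le> W * \<beta>' * e" .
  have "?S ah bh = (x * y) *\<^sub>R ?S (a j) (b j) + x *\<^sub>R ?S (a j) pb + y *\<^sub>R ?S pa (b j) + ?S pa pb"
    using offdiag_split[of w a b c j x "a j" pa y "b j" pb] sa(1) sb(1) by simp
  then have "norm (?S ah bh) \<le> norm ((x * y) *\<^sub>R ?S (a j) (b j)) + norm (x *\<^sub>R ?S (a j) pb)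
      + norm (y *\<^sub>R ?S pa (b j)) + norm (?S pa pb)"
    by (simp only:) (intro norm_triangle_le add_mono order_refl norm_triangle_ineq)
  also have "\<dots> = \<bar>x * y\<bar> * norm (?S (a j) (b j)) + \<bar>x\<bar> * norm (?S (a j) pb)
      + \<bar>y\<bar> * norm (?S pa (b j)) + norm (?S pa pb)"
    by (simp only: norm_scaleR)
  also have "\<dots> \<le> norm (?S (a j) (b j)) + norm (?S (a j) pb) + norm (?S pa (b j)) + norm (?S pa pb)"
    using sa(5) sb(5) by (intro add_mono mult_left_le_one_le) (auto simp: abs_mult mult_le_one)
  also have "\<dots> \<le> norm (?S (a j) (b j)) + W * e * (2 * \<mu> * M\<^sup>2 + \<beta>')"
    using cross_a cross_b diag by (simp add: algebra_simps power2_eq_square)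
  finally show ?thesis .
qed

lemma signal_bounds:
  fixes ah bh u v :: "real^'d::finite"
  assumes units: "norm ah = 1" "norm u = 1" "norm bh = 1" "norm v = 1"
    and close: "vdist ah u \<le> e" "vdist bh v \<le> e" and e: "e\<^sup>2 \<le> 1" and wj: "0 \<le> wj"
  shows "wj * (1 - e\<^sup>2) \<le> \<bar>wj * (ah \<bullet> u) * (bh \<bullet> v)\<bar>" "\<bar>wj * (ah \<bullet> u) * (bh \<bullet> v)\<bar> \<le> wj"
proof -
  note sa = unit_split_along[OF units(1,2) close(1)]
  note sb = unit_split_along[OF units(3,4) close(2)]
  have "(1 - e\<^sup>2)\<^sup>2 \<le> \<bar>(ah \<bullet> u) * (bh \<bullet> v)\<bar>\<^sup>2"
    using mult_mono[OF sa(4) sb(4)] e by (simp add: power2_eq_square power_mult_distrib mult_ac)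
  then have "1 - e\<^sup>2 \<le> \<bar>(ah \<bullet> u) * (bh \<bullet> v)\<bar>" by (rule power2_le_imp_le) simp
  then show "wj * (1 - e\<^sup>2) \<le> \<bar>wj * (ah \<bullet> u) * (bh \<bullet> v)\<bar>"
    using wj by (simp add: abs_mult mult.assoc mult_left_mono)
  have "\<bar>(ah \<bullet> u) * (bh \<bullet> v)\<bar> \<le> 1" using sa(5) sb(5) by (simp add: abs_mult mult_le_one)
  then show "\<bar>wj * (ah \<bullet> u) * (bh \<bullet> v)\<bar> \<le> wj"
    using wj by (simp add: abs_mult mult.assoc mult_left_le)
qed

lemma step_size_consequences:
  fixes wmin wmax wj e K q \<gamma> :: real
  assumes w: "0 < wmin" "wmin \<le> wj" "wj \<le> wmax" and e: "0 \<le> e" and K: "0 < K"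
    and q: "q = 2 * wmax / wmin * K"
    and e2: "e \<le> sqrt (wmin / (6 * wmax))" and e3: "e \<le> wmin * q / (4 * wmax)"
    and e4: "e \<le> 2 * wmax / (wmin * q) * (wmin / (6 * wmax) - \<gamma>)"
  shows "e\<^sup>2 \<le> 1" "wj * e\<^sup>2 \<le> wmin / 6" "wj * e\<^sup>2 \<le> wmax * e * K"
    "wmax * e * K \<le> wmin / 6 - wmax * \<gamma>"
proof -
  have wmax: "0 < wmax" using w by linarith
  have e_sq: "e\<^sup>2 \<le> wmin / (6 * wmax)"
    using power_mono[OF e2 e, of 2] w wmax by simp
  moreover have "wmin / (6 * wmax) \<le> 1" using w wmax by (simp add: divide_le_eq)
  ultimately show "e\<^sup>2 \<le> 1" by linarith
  have "wj * e\<^sup>2 \<le> wmax * (wmin / (6 * wmax))"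
    using e_sq w e by (intro mult_mono) auto
  then show "wj * e\<^sup>2 \<le> wmin / 6" using wmax by simp
  have "e \<le> K / 2" using e3 w wmax unfolding q by (simp add: field_simps)
  then have "wj * e * e \<le> wmax * e * (K / 2)" using w e by (intro mult_mono) auto
  moreover have "0 \<le> wmax * e * K" using wmax e K by simp
  ultimately show "wj * e\<^sup>2 \<le> wmax * e * K" by (simp add: power2_eq_square)
  have "e * K \<le> wmin / (6 * wmax) - \<gamma>"
    using e4 w wmax K unfolding q by (simp add: field_simps)
  then have "wmax * (e * K) \<le> wmax * (wmin / (6 * wmax) - \<gamma>)"
    using wmax by (intro mult_left_mono) auto
  then show "wmax * e * K \<le> wmin / 6 - wmax * \<gamma>"
    using wmax by (simp add: algebra_simps)
qed

lemma perturbed_contraction_split: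
  fixes w :: "'k::finite \<Rightarrow> real" and a b c :: "'k \<Rightarrow> real^'d::finite" and \<Psi> :: "'d tensor3"
  assumes w0: "\<And>i. 0 \<le> w i" and wW: "\<And>i. w i \<le> W"
    and incoh_a: "\<And>i. i \<noteq> j \<Longrightarrow> \<bar>a i \<bullet> a j\<bar> \<le> \<mu>"
    and incoh_b: "\<And>i. i \<noteq> j \<Longrightarrow> \<bar>b i \<bullet> b j\<bar> \<le> \<mu>" and mu: "0 \<le> \<mu>"
    and cols: "colmat_norm a \<le> M" "colmat_norm b \<le> M" "colmat_norm c \<le> M"
    and T: "tnorm (cp_tensor w a b c) \<le> \<kappa> * W" and beta: "\<kappa> * e \<le> \<beta>'"
    and diag: "norm (offdiag w a b c j (a j) (b j)) \<le> \<eta>"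
    and units: "norm (a j) = 1" "norm (b j) = 1" "norm ah = 1" "norm bh = 1"
    and close: "vdist ah (a j) \<le> e" "vdist bh (b j) \<le> e" and e: "e\<^sup>2 \<le> 1"
  defines "t \<equiv> w j * (ah \<bullet> a j) * (bh \<bullet> b j)"
  shows "w j - w j * e\<^sup>2 \<le> \<bar>t\<bar>" and "\<bar>t\<bar> \<le> w j"
    and "norm (tform_I (\<lambda>p r s. cp_tensor w a b c p r s + \<Psi> p r s) ah bh - t *\<^sub>R c j)
         \<le> tnorm \<Psi> + \<eta> + W * e * (2 * \<mu> * M\<^sup>2 + \<beta>')"
proof -
  note signal = signal_bounds[OF units(3,1,4,2) close e w0[of j], folded t_def]
  then show "w j - w j * e\<^sup>2 \<le> \<bar>t\<bar>" and "\<bar>t\<bar> \<le> w j" by (simp_all add: algebra_simps)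
  have "tform_I (\<lambda>p r s. cp_tensor w a b c p r s + \<Psi> p r s) ah bh - t *\<^sub>R c j
      = offdiag w a b c j ah bh + tform_I \<Psi> ah bh"
    unfolding tform_I_add tform_I_cp_split[of _ _ _ _ _ _ j] t_def by (simp add: inner_commute)
  also have "norm \<dots> \<le> (\<eta> + W * e * (2 * \<mu> * M\<^sup>2 + \<beta>')) + tnorm \<Psi>"
    using offdiag_residual_le[OF w0 wW incoh_a incoh_b mu cols T beta units close] diag
      tform_I_le[of \<Psi> ah bh] units(3,4)
    by (intro order_trans[OF norm_triangle_ineq] add_mono) auto
  finally show "norm (tform_I (\<lambda>p r s. cp_tensor w a b c p r s + \<Psi> p r s) ah bh - t *\<^sub>R c j)
      \<le> tnorm \<Psi> + \<eta> + W * e * (2 * \<mu> * M\<^sup>2 + \<beta>')" by simp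
qed

lemma normalized_contraction_bounds:
  fixes c v :: "real^'d::finite"
  assumes c: "norm c = 1" and R: "norm (v - t *\<^sub>R c) \<le> \<rho>" and rho: "\<rho> \<le> wmin / 3"
    and t: "wj - \<delta> \<le> \<bar>t\<bar>" "\<bar>t\<bar> \<le> wj" and delta: "\<delta> \<le> wmin / 6"
    and w: "0 < wmin" "wmin \<le> wj"
  shows "vdist ((1 / norm v) *\<^sub>R v) c \<le> \<rho> / (wmin / 2)" and "\<bar>norm v - wj\<bar> \<le> \<rho> + \<delta>"
proof -
  have t_half: "wmin / 2 \<le> \<bar>t\<bar>" and small: "norm (v - t *\<^sub>R c) < \<bar>t\<bar>"
    using R rho t delta w by linarith+
  have "v = t *\<^sub>R c + (v - t *\<^sub>R c)" by simp
  note pert = perturbed_direction[OF c this small]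
  have "vdist ((1 / norm v) *\<^sub>R v) c \<le> norm (v - t *\<^sub>R c) / \<bar>t\<bar>" using pert(1) .
  also have "\<dots> \<le> \<rho> / (wmin / 2)"
    using R t_half w order_trans[OF norm_ge_zero R] by (intro frac_le) auto
  finally show "vdist ((1 / norm v) *\<^sub>R v) c \<le> \<rho> / (wmin / 2)" .
  show "\<bar>norm v - wj\<bar> \<le> \<rho> + \<delta>" using pert(2) R t by linarith
qed

theorem mainTheorem2:
  fixes w :: "'k::finite \<Rightarrow> real"
    and a b c :: "'k \<Rightarrow> real^'d::finite"
    and \<alpha> \<alpha>0 \<beta>' :: real
    and \<Psi> :: "'d tensor3"
    and j :: 'k
    and ah bh :: "real^'d"
  defines "wmax \<equiv> Max (range w)"
    and "wmin \<equiv> Min (range w)"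
    and "dd \<equiv> real CARD('d)"
    and "kk \<equiv> real CARD('k)"
  defines "T \<equiv> cp_tensor w a b c"
  defines "q \<equiv> 2 * wmax / wmin * (2 * \<alpha> / sqrt dd * (1 + \<alpha>0 * sqrt (kk / dd))\<^sup>2 + \<beta>')"
    and "\<psi> \<equiv> tnorm \<Psi>"
  defines "Th \<equiv> (\<lambda>p r s. T p r s + \<Psi> p r s)"
  defines "\<epsilon>0 \<equiv> max (vdist ah (a j)) (vdist bh (b j))"
  defines "ch \<equiv> (1 / norm (tform_I Th ah bh)) *\<^sub>R tform_I Th ah bh"
  defines "Const \<equiv> 2 / wmin * (\<psi> + wmax * \<alpha> * sqrt kk / dd)"
  assumes w_pos: "\<And>i. w i > 0"
    and units: "\<And>i. norm (a i) = 1" "\<And>i. norm (b i) = 1" "\<And>i. norm (c i) = 1"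
    and params: "\<alpha> > 0" "\<alpha>0 > 0" "\<beta>' > 0"
    and hyp_i: "\<And>i i'. i \<noteq> i' \<Longrightarrow>
        max \<bar>a i \<bullet> a i'\<bar> (max \<bar>b i \<bullet> b i'\<bar> \<bar>c i \<bullet> c i'\<bar>) \<le> \<alpha> / sqrt dd"
    and hyp_ii: "max (colmat_norm a) (max (colmat_norm b) (colmat_norm c)) \<le> 1 + \<alpha>0 * sqrt (kk / dd)"
    and hyp_iii1: "tnorm T \<le> \<alpha>0 * wmax"
    and hyp_iii2: "\<And>j'. norm (\<Sum>i\<in>UNIV - {j'}. (w i * (a i \<bullet> a j') * (b i \<bullet> b j')) *\<^sub>R c i)
                      \<le> \<alpha> * wmax * sqrt kk / dd"
    and q_small: "q < 1/2"
    and psi_small: "\<psi> \<le> wmin / 6"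
    and unit_hat: "norm ah = 1" "norm bh = 1"
    and eps_small: "\<epsilon>0 \<le> \<beta>' / \<alpha>0" "\<epsilon>0 \<le> sqrt (wmin / (6 * wmax))"
      "\<epsilon>0 \<le> wmin * q / (4 * wmax)"
      "\<epsilon>0 \<le> 2 * wmax / (wmin * q) * (wmin / (6 * wmax) - \<alpha> * sqrt kk / dd)"
  shows "vdist ch (c j) \<le> Const + q * \<epsilon>0
    \<and> (vdist ch (c j) \<le> \<epsilon>0 \<longrightarrow> \<bar>tform Th ah bh ch - w j\<bar> \<le> wmin / 2 * Const + wmin * q * \<epsilon>0)"
proof -
  have wle: "w i \<le> wmax" and wge: "wmin \<le> w i" and w0: "0 \<le> w i" for i
    unfolding wmax_def wmin_def using w_pos[of i] by (auto intro: Max_ge Min_le less_imp_le)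
  have wmin_pos: "0 < wmin" unfolding wmin_def using w_pos by (subst Min_gr_iff) auto
  define M where "M = 1 + \<alpha>0 * sqrt (kk / dd)"
  define K where "K = 2 * (\<alpha> / sqrt dd) * M\<^sup>2 + \<beta>'"
  have mu: "0 \<le> \<alpha> / sqrt dd" using params unfolding dd_def by simp
  then have "0 \<le> 2 * (\<alpha> / sqrt dd) * M\<^sup>2" by (intro mult_nonneg_nonneg) auto
  then have K: "0 < K" unfolding K_def using params(3) by linarith
  have qK: "q = 2 * wmax / wmin * K" unfolding q_def K_def M_def by simp
  have close: "vdist ah (a j) \<le> \<epsilon>0" "vdist bh (b j) \<le> \<epsilon>0" unfolding \<epsilon>0_def by auto
  have e0: "0 \<le> \<epsilon>0" using unit_split_along(6)[OF unit_hat(1) units(1) close(1)] .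
  note budget = step_size_consequences[OF wmin_pos wge[of j] wle[of j] e0 K qK eps_small(2-4)]
  have incoh: "\<bar>a i \<bullet> a j\<bar> \<le> \<alpha> / sqrt dd" "\<bar>b i \<bullet> b j\<bar> \<le> \<alpha> / sqrt dd" if "i \<noteq> j" for i
    using hyp_i[OF that] by auto
  have cols: "colmat_norm a \<le> M" "colmat_norm b \<le> M" "colmat_norm c \<le> M"
    using hyp_ii unfolding M_def by auto
  have beta: "\<alpha>0 * \<epsilon>0 \<le> \<beta>'" using eps_small(1) params(2) by (simp add: pos_le_divide_eq mult.commute)
  note split = perturbed_contraction_split[where W=wmax and \<mu>="\<alpha> / sqrt dd" and j=j,
      OF w0 wle incoh mu cols hyp_iii1[unfolded T_def] beta hyp_iii2[of j, folded offdiag_def]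
      units(1,2) unit_hat close budget(1)]
  define \<rho> where "\<rho> = \<psi> + wmax * \<alpha> * sqrt kk / dd + wmax * \<epsilon>0 * K"
  have R_le: "norm (tform_I Th ah bh - (w j * (ah \<bullet> a j) * (bh \<bullet> b j)) *\<^sub>R c j) \<le> \<rho>"
    using split(3)[where \<Psi>=\<Psi>, folded K_def \<psi>_def T_def]
    unfolding \<rho>_def Th_def by (simp add: mult.commute[of \<alpha> wmax])
  have rho_small: "\<rho> \<le> wmin / 3" using budget(4) psi_small unfolding \<rho>_def by (simp add: mult.assoc)
  note bounds =
    normalized_contraction_bounds[OF units(3) R_le rho_small split(1,2) budget(2) wmin_pos wge[of j], folded ch_def]
  have "vdist ch (c j) \<le> \<rho> / (wmin / 2)" by (rule bounds(1))
  also have "\<dots> = Const + q * \<epsilon>0" unfolding \<rho>_def Const_def qK using wmin_pos by (simp add: field_simps)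
  finally have direction: "vdist ch (c j) \<le> Const + q * \<epsilon>0" .
  have "\<bar>tform Th ah bh ch - w j\<bar> \<le> \<rho> + w j * \<epsilon>0\<^sup>2"
    using bounds(2) unfolding ch_def tform_at_normalized .
  also have "\<dots> \<le> \<rho> + wmax * \<epsilon>0 * K" using budget(3) by simp
  also have "\<dots> = wmin / 2 * Const + wmin * q * \<epsilon>0"
    unfolding \<rho>_def Const_def qK using wmin_pos by (simp add: field_simps)
  finally show ?thesis using direction by blast
qed

end
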